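(* Let $T\ge 1$ and, for $t=1,\dots,T$, let $X_t\in\mathbb{R}^{n_t\times p}$ be random design matrices, and let $y_t=X_t\beta+\epsilon_t$, where $\beta\in\mathbb{R}^p$ is deterministic and the noise vectors $\epsilon_t\in\mathbb{R}^{n_t}$ have entries (across all $t$) that are i.i.d. with mean $0$ and variance $\sigma^2$, independent of $X=(X_1^\top,\dots,X_T^\top)^\top$. Let $\lambda_1,\dots,\lambda_T>0$, $\hat\Sigma_t=\frac{1}{n_t}X_t^\top X_t$, $A_t=\lambda_t(\hat\Sigma_t+\lambda_t I_p)^{-1}$, and let $\hat\beta_T$ be the continual ridge estimator (defined in the context). Then for any positive semidefinite $\Sigma_0\in\mathbb{R}^{p\times p}$, $$B_X(\hat\beta_T;\beta,\Sigma_0)=\beta^\top A_1A_2\cdots A_T\Sigma_0A_T\cdots A_2A_1\beta,$$ $$V_X(\hat\beta_T;\beta,\Sigma_0)=\sigma^2\sum_{t=1}^T\frac{1}{\lambda_t n_t}\mathrm{Tr}\big[A_TA_{T-1}\cdots A_{t+1}(A_t-A_t^2)A_{t+1}\cdots A_{T-1}A_T\Sigma_0\big],$$ with the convention that an empty matrix product equals $I_p$.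
   Context: Continual ridge estimator: $\hat\beta_0=0$ and for $t=1,\dots,T$, $\hat\beta_t=\arg\min_{b\in\mathbb{R}^p}\{\frac{1}{n_t}\|X_tb-y_t\|^2+\lambda_t\|b-\hat\beta_{t-1}\|^2\}$; equivalently $\hat\beta_t=(\hat\Sigma_t+\lambda_tI_p)^{-1}\frac{1}{n_t}X_t^\top y_t+A_t\hat\beta_{t-1}$. For an estimator $\hat\beta$ and a positive semidefinite matrix $\Sigma_0$, the bias and variance terms are $B_X(\hat\beta;\beta,\Sigma_0)=(\mathbb{E}(\hat\beta\mid X)-\beta)^\top\Sigma_0(\mathbb{E}(\hat\beta\mid X)-\beta)$ and $V_X(\hat\beta;\beta,\Sigma_0)=\mathrm{Tr}(\mathrm{Cov}(\hat\beta\mid X)\Sigma_0)$. *)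

theory Defs
  imports "HOL-Analysis.Analysis" "HOL-Probability.Probability"
begin

text \<open>Design matrices: X t i is the i-th row (i < n t) of the n_t x p matrix X_t.
  p x p matrices are real^'p^'p.\<close>

definition outer_prod :: "real^'p \<Rightarrow> real^'p \<Rightarrow> real^'p^'p" where
  "outer_prod u v = (\<chi> i j. u $ i * v $ j)"

definition Sigma_hat :: "(nat \<Rightarrow> nat \<Rightarrow> real^'p) \<Rightarrow> (nat \<Rightarrow> nat) \<Rightarrow> nat \<Rightarrow> real^'p^'p" where
  "Sigma_hat X n t = (1 / real (n t)) *\<^sub>R (\<Sum>i<n t. outer_prod (X t i) (X t i))"

definition A_mat :: "(nat \<Rightarrow> real) \<Rightarrow> (nat \<Rightarrow> nat \<Rightarrow> real^'p) \<Rightarrow> (nat \<Rightarrow> nat) \<Rightarrow> nat \<Rightarrow> real^'p^'p" where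
  "A_mat lam X n t = lam t *\<^sub>R matrix_inv (Sigma_hat X n t + lam t *\<^sub>R mat 1)"

definition XTy :: "(nat \<Rightarrow> nat \<Rightarrow> real^'p) \<Rightarrow> (nat \<Rightarrow> nat) \<Rightarrow> nat \<Rightarrow> (nat \<Rightarrow> real) \<Rightarrow> real^'p" where
  "XTy X n t yt = (1 / real (n t)) *\<^sub>R (\<Sum>i<n t. yt i *\<^sub>R X t i)"

text \<open>Continual ridge estimator hat beta_t (closed form from the context), t = 0,1,2,...;
  y t i is the i-th response of task t.\<close>
primrec cridge :: "(nat \<Rightarrow> real) \<Rightarrow> (nat \<Rightarrow> nat \<Rightarrow> real^'p) \<Rightarrow> (nat \<Rightarrow> nat) \<Rightarrow> (nat \<Rightarrow> nat \<Rightarrow> real) \<Rightarrow> nat \<Rightarrow> real^'p" where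
  "cridge lam X n y 0 = 0"
| "cridge lam X n y (Suc t) =
     matrix_inv (Sigma_hat X n (Suc t) + lam (Suc t) *\<^sub>R mat 1) *v XTy X n (Suc t) (y (Suc t))
     + A_mat lam X n (Suc t) *v cridge lam X n y t"

definition mprod :: "(nat \<Rightarrow> real^'p^'p) \<Rightarrow> nat list \<Rightarrow> real^'p^'p" where
  "mprod M ks = foldr (\<lambda>k P. M k ** P) ks (mat 1)"

text \<open>Bias and variance terms for a random vector estimator bh on probability space M
  (conditional on the design, which is held fixed here).\<close>
definition mean_vec :: "'a measure \<Rightarrow> ('a \<Rightarrow> real^'p) \<Rightarrow> real^'p" where
  "mean_vec M bh = (\<chi> j. integral\<^sup>L M (\<lambda>\<omega>. bh \<omega> $ j))"

definition cov_mat :: "'a measure \<Rightarrow> ('a \<Rightarrow> real^'p) \<Rightarrow> real^'p^'p" where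
  "cov_mat M bh = (\<chi> j k. integral\<^sup>L M (\<lambda>\<omega>. (bh \<omega> $ j - mean_vec M bh $ j) * (bh \<omega> $ k - mean_vec M bh $ k)))"

definition bias_term :: "'a measure \<Rightarrow> ('a \<Rightarrow> real^'p) \<Rightarrow> real^'p \<Rightarrow> real^'p^'p \<Rightarrow> real" where
  "bias_term M bh \<beta> S0 = (mean_vec M bh - \<beta>) \<bullet> (S0 *v (mean_vec M bh - \<beta>))"

definition var_term :: "'a measure \<Rightarrow> ('a \<Rightarrow> real^'p) \<Rightarrow> real^'p^'p \<Rightarrow> real" where
  "var_term M bh S0 = trace (cov_mat M bh ** S0)"

end

theory Submission
  imports Defs
begin

(* Unrolling the recursion gives hat beta_T = sum_t A_T ... A_(t+1) R_t (1/n_t) X_t^T y_t with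
   R_t = (hat Sigma_t + lambda_t I)^-1.  For y_t = X_t beta + eps_t the signal part telescopes to
   beta - A_T ... A_1 beta, because R_t hat Sigma_t = I - A_t, while the noise part is a fixed linear
   combination of centred, pairwise uncorrelated errors of variance sigma^2.  Hence the conditional
   mean is beta - A_T ... A_1 beta, which gives the bias, and the conditional covariance is
   sigma^2 sum_t (1/n_t) A_T ... A_(t+1) R_t hat Sigma_t R_t A_(t+1) ... A_T, where
   R_t hat Sigma_t R_t = (A_t - A_t^2) / lambda_t. *)

lemma (in prob_space) indep_vars_imp_indep_var:
  assumes "indep_vars M' X I" "k \<in> I" "l \<in> I" "k \<noteq> l"
  shows "indep_var (M' k) (X k) (M' l) (X l)"
proof -
  have "indep_var (M' k) ((\<lambda>f. f k) \<circ> (\<lambda>\<omega>. restrict (\<lambda>i. X i \<omega>) {k}))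
                  (M' l) ((\<lambda>f. f l) \<circ> (\<lambda>\<omega>. restrict (\<lambda>i. X i \<omega>) {l}))"
    using assms by (intro indep_var_compose[OF indep_var_restrict[OF assms(1)]]) auto
  also have "(\<lambda>f. f k) \<circ> (\<lambda>\<omega>. restrict (\<lambda>i. X i \<omega>) {k}) = X k" by auto
  also have "(\<lambda>f. f l) \<circ> (\<lambda>\<omega>. restrict (\<lambda>i. X i \<omega>) {l}) = X l" by auto
  finally show ?thesis .
qed

context prob_space
begin

context
  fixes e :: "'k \<Rightarrow> 'a \<Rightarrow> real" and K :: "'k set" and s :: real
  assumes finite_noise_index: "finite K"
    and indep_noise: "indep_vars (\<lambda>_. borel) e K"
    and noise_square_integrable: "\<And>k. k \<in> K \<Longrightarrow> integrable M (\<lambda>\<omega>. (e k \<omega>)\<^sup>2)"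
    and noise_centred: "\<And>k. k \<in> K \<Longrightarrow> expectation (e k) = 0"
    and noise_variance: "\<And>k. k \<in> K \<Longrightarrow> expectation (\<lambda>\<omega>. (e k \<omega>)\<^sup>2) = s"
begin

lemma noise_measurable: "k \<in> K \<Longrightarrow> e k \<in> borel_measurable M"
  using indep_noise unfolding indep_vars_def by blast

lemma noise_integrable: "k \<in> K \<Longrightarrow> integrable M (e k)"
  by (rule square_integrable_imp_integrable[OF noise_measurable noise_square_integrable])

lemma noise_product_integrable:
  assumes "k \<in> K" "l \<in> K"
  shows "integrable M (\<lambda>\<omega>. e k \<omega> * e l \<omega>)"
proof (cases "k = l")
  case True
  then show ?thesis using noise_square_integrable assms by (simp add: power2_eq_square)
next
  case False
  then show ?thesis
    using assms indep_vars_imp_indep_var[OF indep_noise] noise_integrable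
    by (intro indep_var_integrable) auto
qed

lemma noise_covariance:
  assumes "k \<in> K" "l \<in> K"
  shows "expectation (\<lambda>\<omega>. e k \<omega> * e l \<omega>) = (if k = l then s else 0)"
proof (cases "k = l")
  case True
  then show ?thesis using noise_variance assms by (simp add: power2_eq_square)
next
  case False
  then show ?thesis
    using assms indep_vars_imp_indep_var[OF indep_noise] noise_integrable noise_centred
    by (subst indep_var_lebesgue_integral) auto
qed

lemma mean_vec_noise:
  "mean_vec M (\<lambda>\<omega>. c + (\<Sum>k\<in>K. e k \<omega> *\<^sub>R w k)) = c"
proof -
  have "expectation (\<lambda>\<omega>. c $ j + (\<Sum>k\<in>K. e k \<omega> * w k $ j)) = c $ j" for j
    using noise_integrable noise_centred by (simp add: prob_space)
  then show ?thesis unfolding mean_vec_def by (simp add: vec_eq_iff sum_component)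
qed

lemma expectation_noise_bilinear:
  "expectation (\<lambda>\<omega>. (\<Sum>k\<in>K. e k \<omega> * a k) * (\<Sum>l\<in>K. e l \<omega> * b l)) = s * (\<Sum>k\<in>K. a k * b k)"
proof -
  have "expectation (\<lambda>\<omega>. (\<Sum>k\<in>K. e k \<omega> * a k) * (\<Sum>l\<in>K. e l \<omega> * b l))
      = expectation (\<lambda>\<omega>. \<Sum>k\<in>K. \<Sum>l\<in>K. (a k * b l) * (e k \<omega> * e l \<omega>))"
    by (simp add: sum_product mult_ac)
  also have "\<dots> = (\<Sum>k\<in>K. \<Sum>l\<in>K. (a k * b l) * expectation (\<lambda>\<omega>. e k \<omega> * e l \<omega>))"
    using noise_product_integrable by (simp add: Bochner_Integration.integral_sum)
  also have "\<dots> = (\<Sum>k\<in>K. \<Sum>l\<in>K. if l = k then s * (a k * b l) else 0)"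
    by (intro sum.cong) (auto simp: noise_covariance)
  also have "\<dots> = s * (\<Sum>k\<in>K. a k * b k)"
    using finite_noise_index by (simp add: sum_distrib_left)
  finally show ?thesis .
qed

lemma cov_mat_noise:
  "cov_mat M (\<lambda>\<omega>. c + (\<Sum>k\<in>K. e k \<omega> *\<^sub>R w k)) = s *\<^sub>R (\<Sum>k\<in>K. outer_prod (w k) (w k))"
  unfolding cov_mat_def mean_vec_noise
  by (simp add: vec_eq_iff sum_component outer_prod_def expectation_noise_bilinear)

end

end

lemma matrix_add_rdistrib: "((A::'a::semiring_1^'n^'m) + B) ** C = A ** C + B ** C"
  by (vector matrix_matrix_mult_def sum.distrib distrib_right)

lemma matrix_diff_rdistrib: "((A::'a::ring_1^'n^'m) - B) ** C = A ** C - B ** C"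
  by (vector matrix_matrix_mult_def sum_subtractf left_diff_distrib)

lemma matrix_diff_ldistrib: "(A::'a::ring_1^'n^'m) ** (B - C) = A ** B - A ** C"
  by (vector matrix_matrix_mult_def sum_subtractf right_diff_distrib)

lemma matrix_vector_mult_uminus_right: "A *v (- x) = - (A *v (x::'a::ring_1^'n))"
  using matrix_vector_mult_diff_distrib[of A 0 x] by simp

lemma sum_matrix_matrix_mult: "(\<Sum>i\<in>S. f i) ** (B::'a::semiring_1^'k^'n) = (\<Sum>i\<in>S. f i ** B)"
  by (induction S rule: infinite_finite_induct) (auto simp: matrix_add_rdistrib)

lemma matrix_matrix_mult_sum: "(B::'a::semiring_1^'n^'m) ** (\<Sum>i\<in>S. f i) = (\<Sum>i\<in>S. B ** f i)"
  by (induction S rule: infinite_finite_induct) (auto simp: matrix_add_ldistrib)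

lemma matrix_vector_mult_sum: "(B::'a::semiring_1^'n^'m) *v (\<Sum>i\<in>S. f i) = (\<Sum>i\<in>S. B *v f i)"
  by (induction S rule: infinite_finite_induct) (auto simp: matrix_vector_right_distrib)

lemma sum_matrix_vector_mult: "(\<Sum>i\<in>S. f i) *v (x::'a::semiring_1^'n) = (\<Sum>i\<in>S. f i *v x)"
  by (induction S rule: infinite_finite_induct) (auto simp: matrix_vector_mult_add_rdistrib)

lemma trace_sum: "trace (\<Sum>i\<in>S. f i) = (\<Sum>i\<in>S. trace (f i :: 'a::comm_semiring_1^'n^'n))"
  by (induction S rule: infinite_finite_induct) (auto simp: trace_add trace_0[simplified])

lemma trace_scaleR: "trace (k *\<^sub>R (A::real^'n^'n)) = k * trace A"
  by (simp add: trace_def sum_distrib_left)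

lemma transpose_add: "transpose (A + B) = transpose A + transpose (B::'a::semiring_1^'n^'m)"
  by (simp add: transpose_def vec_eq_iff)

lemma transpose_sum: "transpose (\<Sum>i\<in>S. f i) = (\<Sum>i\<in>S. transpose (f i :: 'a::semiring_1^'n^'m))"
  by (induction S rule: infinite_finite_induct) (auto simp: transpose_add transpose_def vec_eq_iff)

lemma inner_matrix_quadratic_form:
  "(Q *v x) \<bullet> (S *v (Q *v x)) = x \<bullet> ((transpose Q ** S ** Q) *v (x::real^'n))"
proof -
  have "(Q *v x) \<bullet> y = x \<bullet> (transpose Q *v y)" for y
    by (metis dot_lmul_matrix inner_commute transpose_matrix_vector)
  then show ?thesis by (simp only: matrix_vector_mul_assoc matrix_mul_assoc)
qed

lemma matrix_inv_left:
  assumes "invertible (G::'a::semiring_1^'n^'m)"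
  shows "matrix_inv G ** G = mat 1"
  using someI_ex[OF assms[unfolded invertible_def]] by (simp add: matrix_inv_def)

lemma transpose_matrix_inv_symmetric:
  assumes "invertible (G::real^'n^'n)" "transpose G = G"
  shows "transpose (matrix_inv G) = matrix_inv G"
proof -
  have "G ** transpose (matrix_inv G) = mat 1"
    using arg_cong[OF matrix_inv_left[OF assms(1)], of transpose] assms(2)
    by (simp add: matrix_transpose_mul)
  then have "matrix_inv G ** G ** transpose (matrix_inv G) = matrix_inv G"
    by (simp flip: matrix_mul_assoc)
  then show ?thesis by (simp add: matrix_inv_left[OF assms(1)])
qed

lemma matrix_scaleR_vector_mult: "(k *\<^sub>R A) *v x = k *\<^sub>R (A *v (x::real^'n))"
  by (simp add: scaleR_matrix_vector_assoc)

lemma psd_plus_scalar_invertible: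
  fixes S :: "real^'n^'n"
  assumes psd: "\<And>x. 0 \<le> x \<bullet> (S *v x)" and "c > 0"
  shows "invertible (S + c *\<^sub>R mat 1)"
proof -
  let ?G = "S + c *\<^sub>R mat 1"
  have kernel: "x = 0" if "?G *v x = 0" for x
  proof -
    have "0 = x \<bullet> (?G *v x)" using that by simp
    also have "\<dots> = x \<bullet> (S *v x) + c * (x \<bullet> x)"
      by (simp add: matrix_vector_mult_add_rdistrib matrix_scaleR_vector_mult inner_add_right)
    finally have "c * (x \<bullet> x) \<le> 0"
      using psd[of x] by linarith
    then have "x \<bullet> x \<le> 0"
      using \<open>c > 0\<close> by (simp add: mult_le_0_iff)
    then show "x = 0"
      by (metis inner_eq_zero_iff inner_ge_zero order_antisym)
  qed
  have "inj ((*v) ?G)"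
  proof (rule injI)
    fix x y
    assume "?G *v x = ?G *v y"
    then have "?G *v (x - y) = 0" by (simp add: matrix_vector_mult_diff_distrib)
    then show "x = y" using kernel[of "x - y"] by simp
  qed
  then show ?thesis
    using matrix_left_invertible_injective invertible_left_inverse by blast
qed

lemma outer_prod_transpose: "transpose (outer_prod u v) = outer_prod v (u::real^'n)"
  by (simp add: outer_prod_def transpose_def vec_eq_iff mult.commute)

lemma outer_prod_mult_vector: "outer_prod u v *v x = (v \<bullet> x) *\<^sub>R (u::real^'n)"
  by (simp add: outer_prod_def matrix_vector_mult_def inner_vec_def vec_eq_iff sum_distrib_left mult_ac)

lemma outer_prod_matrix_vector_mult:
  "outer_prod (B *v u) (B *v v) = B ** outer_prod u v ** transpose (B::real^'n^'m)"
  by (simp add: outer_prod_def matrix_vector_mult_def matrix_matrix_mult_def transpose_def vec_eq_iff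
      sum_distrib_left sum_distrib_right mult_ac sum_product)

lemma sum_outer_prod_matrix_vector_mult:
  "(\<Sum>i\<in>S. outer_prod (B *v u i) (B *v u i)) = B ** (\<Sum>i\<in>S. outer_prod (u i) (u i)) ** transpose (B::real^'n^'m)"
  by (simp add: outer_prod_matrix_vector_mult matrix_matrix_mult_sum sum_matrix_matrix_mult)

lemma mprod_append: "mprod M (xs @ ys) = mprod M xs ** mprod M ys"
  by (induction xs) (auto simp: mprod_def matrix_mul_assoc)

lemma mprod_transpose:
  assumes "\<And>k. k \<in> set ks \<Longrightarrow> transpose (M k) = M k"
  shows "transpose (mprod M ks) = mprod M (rev ks)"
  using assms
proof (induction ks)
  case Nil
  then show ?case by (simp add: mprod_def)
next
  case (Cons k ks)
  then have "transpose (mprod M (k # ks)) = mprod M (rev ks) ** mprod M [k]"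
    by (simp add: mprod_def matrix_transpose_mul)
  then show ?case by (simp add: mprod_append)
qed

lemma mprod_rev_upt_Suc: "a \<le> t \<Longrightarrow> mprod M (rev [a..<Suc t]) = M t ** mprod M (rev [a..<t])"
  by (simp add: mprod_def)

lemma mprod_rev_upt_Suc_right: "a < t \<Longrightarrow> mprod M (rev [Suc a..<t]) ** M a = mprod M (rev [a..<t])"
  by (simp add: upt_conv_Cons mprod_append) (simp add: mprod_def)

lemma sum_mprod_rev_telescope:
  "(\<Sum>s=1..t. mprod M (rev [Suc s..<Suc t]) ** (mat 1 - M s)) = mat 1 - mprod M (rev [1..<Suc t])"
proof -
  have "(\<Sum>s=1..t. mprod M (rev [Suc s..<Suc t]) ** (mat 1 - M s))
      = (\<Sum>s=1..t. mprod M (rev [Suc s..<Suc t]) - mprod M (rev [s..<Suc t]))"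
    by (intro sum.cong refl) (simp add: matrix_diff_ldistrib mprod_rev_upt_Suc_right del: upt_Suc)
  also have "\<dots> = mat 1 - mprod M (rev [1..<Suc t])"
    using sum_Suc_diff[of 1 t "\<lambda>s. mprod M (rev [s..<Suc t])"] by (simp add: mprod_def)
  finally show ?thesis .
qed

definition ridge_resolvent ::
    "(nat \<Rightarrow> real) \<Rightarrow> (nat \<Rightarrow> nat \<Rightarrow> real^'p) \<Rightarrow> (nat \<Rightarrow> nat) \<Rightarrow> nat \<Rightarrow> real^'p^'p" where
  "ridge_resolvent lam X n t = matrix_inv (Sigma_hat X n t + lam t *\<^sub>R mat 1)"

definition noise_gain ::
    "(nat \<Rightarrow> real) \<Rightarrow> (nat \<Rightarrow> nat \<Rightarrow> real^'p) \<Rightarrow> (nat \<Rightarrow> nat) \<Rightarrow> nat \<Rightarrow> nat \<Rightarrow> real^'p^'p" where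
  "noise_gain lam X n T t =
     (1 / real (n t)) *\<^sub>R (mprod (A_mat lam X n) (rev [Suc t..<Suc T]) ** ridge_resolvent lam X n t)"

lemma A_mat_eq_ridge_resolvent: "A_mat lam X n t = lam t *\<^sub>R ridge_resolvent lam X n t"
  by (simp add: A_mat_def ridge_resolvent_def)

lemma Sigma_hat_mult_vector:
  "Sigma_hat X n t *v v = (1 / real (n t)) *\<^sub>R (\<Sum>i<n t. (X t i \<bullet> v) *\<^sub>R X t i)"
  by (simp add: Sigma_hat_def matrix_scaleR_vector_mult sum_matrix_vector_mult outer_prod_mult_vector)

lemma Sigma_hat_symmetric: "transpose (Sigma_hat X n t) = Sigma_hat X n t"
  by (simp add: Sigma_hat_def transpose_scalar transpose_sum outer_prod_transpose)

lemma Sigma_hat_psd: "0 \<le> x \<bullet> (Sigma_hat X n t *v x)"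
proof -
  have "x \<bullet> (Sigma_hat X n t *v x) = (1 / real (n t)) * (\<Sum>i<n t. (X t i \<bullet> x)\<^sup>2)"
    by (simp add: Sigma_hat_mult_vector inner_sum_right power2_eq_square inner_commute)
  also have "\<dots> \<ge> 0" by (intro mult_nonneg_nonneg sum_nonneg) auto
  finally show ?thesis .
qed

lemma ridge_matrix_invertible: "lam t > 0 \<Longrightarrow> invertible (Sigma_hat X n t + lam t *\<^sub>R mat 1)"
  by (rule psd_plus_scalar_invertible[OF Sigma_hat_psd])

lemma ridge_resolvent_Sigma_hat:
  assumes "lam t > 0"
  shows "ridge_resolvent lam X n t ** Sigma_hat X n t = mat 1 - A_mat lam X n t"
  using matrix_inv_left[OF ridge_matrix_invertible[of lam t X n, OF assms]]
  by (simp add: ridge_resolvent_def A_mat_def matrix_add_ldistrib matrix_scalar_ac algebra_simps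
      flip: scalar_matrix_assoc)

lemma ridge_resolvent_symmetric:
  "lam t > 0 \<Longrightarrow> transpose (ridge_resolvent lam X n t) = ridge_resolvent lam X n t"
  unfolding ridge_resolvent_def
  by (rule transpose_matrix_inv_symmetric[OF ridge_matrix_invertible])
     (simp_all add: transpose_add transpose_scalar Sigma_hat_symmetric)

lemma A_mat_symmetric: "lam t > 0 \<Longrightarrow> transpose (A_mat lam X n t) = A_mat lam X n t"
  by (simp add: A_mat_eq_ridge_resolvent transpose_scalar ridge_resolvent_symmetric)

lemma A_mat_minus_square:
  assumes "lam t > 0"
  shows "A_mat lam X n t - A_mat lam X n t ** A_mat lam X n t
    = lam t *\<^sub>R (ridge_resolvent lam X n t ** Sigma_hat X n t ** ridge_resolvent lam X n t)"
  unfolding ridge_resolvent_Sigma_hat[of lam t X n, OF assms]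
  by (simp add: A_mat_eq_ridge_resolvent matrix_diff_rdistrib matrix_scalar_ac scaleR_diff_right
      flip: scalar_matrix_assoc)

lemma transpose_mprod_A_mat:
  assumes "\<And>k. a \<le> k \<Longrightarrow> k < b \<Longrightarrow> lam k > 0"
  shows "transpose (mprod (A_mat lam X n) (rev [a..<b])) = mprod (A_mat lam X n) [a..<b]"
  using assms by (subst mprod_transpose) (auto simp: A_mat_symmetric)

lemma cridge_eq_sum:
  "cridge lam X n y t = (\<Sum>s=1..t. mprod (A_mat lam X n) (rev [Suc s..<Suc t])
      *v (ridge_resolvent lam X n s *v XTy X n s (y s)))"
proof (induction t)
  case 0
  show ?case by simp
next
  case (Suc t)
  have "A_mat lam X n (Suc t) *v cridge lam X n y t
      = (\<Sum>s=1..t. mprod (A_mat lam X n) (rev [Suc s..<Suc (Suc t)])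
          *v (ridge_resolvent lam X n s *v XTy X n s (y s)))"
    unfolding Suc.IH matrix_vector_mult_sum
    by (intro sum.cong refl) (simp add: matrix_vector_mul_assoc matrix_mul_assoc mprod_rev_upt_Suc del: upt_Suc)
  then show ?case
    by (simp add: ridge_resolvent_def mprod_def del: upt_Suc)
qed

lemma XTy_linear_model:
  "XTy X n t (\<lambda>i. X t i \<bullet> \<beta> + e i)
     = Sigma_hat X n t *v \<beta> + (\<Sum>i<n t. e i *\<^sub>R ((1 / real (n t)) *\<^sub>R X t i))"
  by (simp add: XTy_def Sigma_hat_mult_vector scaleR_add_left sum.distrib scaleR_add_right
      scaleR_sum_right inner_commute)

lemma cridge_linear_model:
  assumes lam_pos: "\<And>t. 1 \<le> t \<Longrightarrow> t \<le> T \<Longrightarrow> lam t > 0"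
  shows "cridge lam X n (\<lambda>t i. X t i \<bullet> \<beta> + e t i) T
    = \<beta> - mprod (A_mat lam X n) (rev [1..<Suc T]) *v \<beta>
      + (\<Sum>(t, i)\<in>Sigma {1..T} (\<lambda>t. {..<n t}). e t i *\<^sub>R (noise_gain lam X n T t *v X t i))"
proof -
  let ?Q = "\<lambda>s. mprod (A_mat lam X n) (rev [Suc s..<Suc T])"
  have summand: "?Q s *v (ridge_resolvent lam X n s *v XTy X n s (\<lambda>i. X s i \<bullet> \<beta> + e s i))
      = (?Q s ** (mat 1 - A_mat lam X n s)) *v \<beta> + (\<Sum>i<n s. e s i *\<^sub>R (noise_gain lam X n T s *v X s i))"
    if "s \<in> {1..T}" for s
  proof -
    have "ridge_resolvent lam X n s *v (Sigma_hat X n s *v \<beta>) = (mat 1 - A_mat lam X n s) *v \<beta>"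
      using ridge_resolvent_Sigma_hat[of lam s X n] lam_pos that by (simp add: matrix_vector_mul_assoc)
    then show ?thesis
      by (simp add: XTy_linear_model noise_gain_def matrix_vector_right_distrib matrix_vector_mult_sum
          matrix_vector_mul_assoc matrix_vector_mult_scaleR matrix_scaleR_vector_mult del: upt_Suc)
  qed
  have "cridge lam X n (\<lambda>t i. X t i \<bullet> \<beta> + e t i) T
      = (\<Sum>s=1..T. ?Q s *v (ridge_resolvent lam X n s *v XTy X n s (\<lambda>i. X s i \<bullet> \<beta> + e s i)))"
    by (rule cridge_eq_sum)
  also have "\<dots> = (\<Sum>s=1..T. (?Q s ** (mat 1 - A_mat lam X n s)) *v \<beta>)
        + (\<Sum>s=1..T. \<Sum>i<n s. e s i *\<^sub>R (noise_gain lam X n T s *v X s i))"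
    unfolding sum.distrib[symmetric] by (rule sum.cong[OF refl summand])
  also have "(\<Sum>s=1..T. (?Q s ** (mat 1 - A_mat lam X n s)) *v \<beta>)
      = \<beta> - mprod (A_mat lam X n) (rev [1..<Suc T]) *v \<beta>"
    unfolding sum_matrix_vector_mult[symmetric] sum_mprod_rev_telescope
    by (simp add: matrix_vector_mult_diff_rdistrib)
  also have "(\<Sum>s=1..T. \<Sum>i<n s. e s i *\<^sub>R (noise_gain lam X n T s *v X s i))
      = (\<Sum>(t, i)\<in>Sigma {1..T} (\<lambda>t. {..<n t}). e t i *\<^sub>R (noise_gain lam X n T t *v X t i))"
    by (rule sum.Sigma) auto
  finally show ?thesis .
qed

lemma sum_outer_prod_rows:
  "(\<Sum>i<n t. outer_prod (B *v X t i) (B *v X t i)) = real (n t) *\<^sub>R (B ** Sigma_hat X n t ** transpose B)"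
  by (cases "n t = 0")
     (simp_all add: sum_outer_prod_matrix_vector_mult Sigma_hat_def matrix_scalar_ac flip: scalar_matrix_assoc)

lemma noise_gain_covariance:
  assumes "lam t > 0"
  shows "(\<Sum>i<n t. outer_prod (noise_gain lam X n T t *v X t i) (noise_gain lam X n T t *v X t i))
    = (1 / (lam t * real (n t))) *\<^sub>R (mprod (A_mat lam X n) (rev [Suc t..<Suc T])
        ** (A_mat lam X n t - A_mat lam X n t ** A_mat lam X n t)
        ** transpose (mprod (A_mat lam X n) (rev [Suc t..<Suc T])))"
proof -
  let ?Q = "mprod (A_mat lam X n) (rev [Suc t..<Suc T])" and ?R = "ridge_resolvent lam X n t"
  have "?R ** Sigma_hat X n t ** ?R
      = (1 / lam t) *\<^sub>R (A_mat lam X n t - A_mat lam X n t ** A_mat lam X n t)"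
    using assms by (simp add: A_mat_minus_square)
  moreover have "noise_gain lam X n T t ** Sigma_hat X n t ** transpose (noise_gain lam X n T t)
      = (1 / real (n t) * (1 / real (n t))) *\<^sub>R (?Q ** (?R ** Sigma_hat X n t ** ?R) ** transpose ?Q)"
    using ridge_resolvent_symmetric[of lam t X n] assms
    by (simp add: noise_gain_def transpose_scalar matrix_transpose_mul matrix_scalar_ac matrix_mul_assoc
        del: upt_Suc flip: scalar_matrix_assoc)
  ultimately show ?thesis
    by (simp add: sum_outer_prod_rows matrix_scalar_ac del: upt_Suc flip: scalar_matrix_assoc)
qed

lemma sum_noise_gain_outer_prod:
  assumes "\<And>t. 1 \<le> t \<Longrightarrow> t \<le> T \<Longrightarrow> lam t > 0"
  shows "(\<Sum>(t, i)\<in>Sigma {1..T} (\<lambda>t. {..<n t}).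
            outer_prod (noise_gain lam X n T t *v X t i) (noise_gain lam X n T t *v X t i))
    = (\<Sum>t=1..T. (1 / (lam t * real (n t))) *\<^sub>R (mprod (A_mat lam X n) (rev [Suc t..<Suc T])
        ** (A_mat lam X n t - A_mat lam X n t ** A_mat lam X n t) ** mprod (A_mat lam X n) [Suc t..<Suc T]))"
  unfolding sum.Sigma[symmetric, OF finite_atLeastAtMost ballI[OF finite_lessThan]]
  using assms
  by (intro sum.cong refl) (simp add: noise_gain_covariance transpose_mprod_A_mat del: upt_Suc)

theorem lemma1:
  fixes M :: "'a measure"
    and T :: nat
    and n :: "nat \<Rightarrow> nat"
    and X :: "nat \<Rightarrow> nat \<Rightarrow> real^'p"
    and \<beta> :: "real^'p"
    and \<epsilon> :: "nat \<Rightarrow> nat \<Rightarrow> 'a \<Rightarrow> real"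
    and \<sigma> :: real
    and lam :: "nat \<Rightarrow> real"
    and \<Sigma>0 :: "real^'p^'p"
  defines "I \<equiv> {(t, i). 1 \<le> t \<and> t \<le> T \<and> i < n t}"
  assumes "prob_space M"
    and "T \<ge> 1"
    and "\<And>t. 1 \<le> t \<Longrightarrow> t \<le> T \<Longrightarrow> n t \<ge> 1"
    and "\<And>t. 1 \<le> t \<Longrightarrow> t \<le> T \<Longrightarrow> lam t > 0"
    and "\<And>t i. (t, i) \<in> I \<Longrightarrow> \<epsilon> t i \<in> borel_measurable M"
    and "prob_space.indep_vars M (\<lambda>_. borel) (\<lambda>(t, i). \<epsilon> t i) I"
    and "\<And>t i s j. (t, i) \<in> I \<Longrightarrow> (s, j) \<in> I \<Longrightarrow> distr M borel (\<epsilon> t i) = distr M borel (\<epsilon> s j)"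
    and "\<And>t i. (t, i) \<in> I \<Longrightarrow> integrable M (\<lambda>\<omega>. (\<epsilon> t i \<omega>)\<^sup>2)"
    and "\<And>t i. (t, i) \<in> I \<Longrightarrow> integral\<^sup>L M (\<epsilon> t i) = 0"
    and "\<And>t i. (t, i) \<in> I \<Longrightarrow> integral\<^sup>L M (\<lambda>\<omega>. (\<epsilon> t i \<omega>)\<^sup>2) = \<sigma>\<^sup>2"
    and "transpose \<Sigma>0 = \<Sigma>0"
    and "\<And>x. x \<bullet> (\<Sigma>0 *v x) \<ge> 0"
  shows "(bias_term M (\<lambda>\<omega>. cridge lam X n (\<lambda>t i. X t i \<bullet> \<beta> + \<epsilon> t i \<omega>) T) \<beta> \<Sigma>0
           = \<beta> \<bullet> ((mprod (A_mat lam X n) [1..<T+1] ** \<Sigma>0 ** mprod (A_mat lam X n) (rev [1..<T+1])) *v \<beta>)) \<and>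
         (var_term M (\<lambda>\<omega>. cridge lam X n (\<lambda>t i. X t i \<bullet> \<beta> + \<epsilon> t i \<omega>) T) \<Sigma>0
           = \<sigma>\<^sup>2 * (\<Sum>t = 1..T. 1 / (lam t * real (n t)) *
               trace (mprod (A_mat lam X n) (rev [t+1..<T+1])
                      ** (A_mat lam X n t - A_mat lam X n t ** A_mat lam X n t)
                      ** mprod (A_mat lam X n) [t+1..<T+1] ** \<Sigma>0)))"
proof -
  \<comment> \<open>Only the first two moments and independence of the errors enter.\<close>
  interpret prob_space M by fact
  let ?A = "A_mat lam X n" and ?e = "\<lambda>(t, i). \<epsilon> t i"
  let ?w = "\<lambda>(t, i). noise_gain lam X n T t *v X t i"
  let ?\<beta>hat = "\<lambda>\<omega>. cridge lam X n (\<lambda>t i. X t i \<bullet> \<beta> + \<epsilon> t i \<omega>) T"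
  have I_Sigma: "I = Sigma {1..T} (\<lambda>t. {..<n t})"
    by (auto simp: I_def)
  have \<beta>hat: "?\<beta>hat = (\<lambda>\<omega>. (\<beta> - mprod ?A (rev [1..<Suc T]) *v \<beta>) + (\<Sum>k\<in>I. ?e k \<omega> *\<^sub>R ?w k))"
    using cridge_linear_model[of T lam X n \<beta>] assms(5) by (simp add: I_Sigma split_beta del: upt_Suc)
  have noise: "finite I" "indep_vars (\<lambda>_. borel) ?e I"
    "\<And>k. k \<in> I \<Longrightarrow> integrable M (\<lambda>\<omega>. (?e k \<omega>)\<^sup>2)"
    "\<And>k. k \<in> I \<Longrightarrow> expectation (?e k) = 0"
    "\<And>k. k \<in> I \<Longrightarrow> expectation (\<lambda>\<omega>. (?e k \<omega>)\<^sup>2) = \<sigma>\<^sup>2"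
    using assms(7,9-11) by (auto simp: I_Sigma split_beta)
  have "bias_term M ?\<beta>hat \<beta> \<Sigma>0
      = (mprod ?A (rev [1..<Suc T]) *v \<beta>) \<bullet> (\<Sigma>0 *v (mprod ?A (rev [1..<Suc T]) *v \<beta>))"
    by (simp add: \<beta>hat bias_term_def mean_vec_noise[OF noise] matrix_vector_mult_uminus_right del: upt_Suc)
  then have bias: "bias_term M ?\<beta>hat \<beta> \<Sigma>0
      = \<beta> \<bullet> ((mprod ?A [1..<T+1] ** \<Sigma>0 ** mprod ?A (rev [1..<T+1])) *v \<beta>)"
    using assms(5) by (simp add: inner_matrix_quadratic_form transpose_mprod_A_mat del: upt_Suc)
  have "cov_mat M ?\<beta>hat = \<sigma>\<^sup>2 *\<^sub>R (\<Sum>k\<in>I. outer_prod (?w k) (?w k))"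
    unfolding \<beta>hat by (rule cov_mat_noise[OF noise])
  then have var: "var_term M ?\<beta>hat \<Sigma>0 = \<sigma>\<^sup>2 * (\<Sum>t = 1..T. 1 / (lam t * real (n t)) *
      trace (mprod ?A (rev [t+1..<T+1]) ** (?A t - ?A t ** ?A t) ** mprod ?A [t+1..<T+1] ** \<Sigma>0))"
    using sum_noise_gain_outer_prod[of T lam X n] assms(5)
    by (simp add: var_term_def I_Sigma split_beta sum_matrix_matrix_mult
        trace_sum trace_scaleR sum_distrib_left matrix_scalar_ac del: upt_Suc flip: scalar_matrix_assoc)
  show ?thesis using bias var by blast
qed

end
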